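(* Let $m\ge 2$, $n=m+1$, and let $A$ be the $n\times n$ matrix of the star graph with center $1$ and leaves $2,\dots,n$, each node carrying a loop of weight $\sqrt m$: $A_{ii}=\sqrt m$ for all $i$, $A_{1j}=A_{j1}=1$ for $j=2,\dots,n$, and all other entries $0$. Let $d=A\mathbb{1}$ and $M_{\mathrm{NG}}=A-\frac{1}{\mathbb{1}^{\mathsf T}d}dd^{\mathsf T}$. Then the largest eigenvalue of $M_{\mathrm{NG}}$ equals $\sqrt m$, it has multiplicity exactly $m-1$, and its eigenspace is $\{x\in\mathbb{R}^n: x_1=0,\ \sum_{i=1}^n x_i=0\}$. Consequently, for every eigenvector $x$ of $M_{\mathrm{NG}}$ associated with $\sqrt m$, the subgraph induced by $\{i: x_i>0\}$ is connected if and only if this set consists of a single node.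
   Context: $\mathbb{1}$ denotes the all-ones vector. The subgraph induced by a set $S$ of nodes is connected if the graph on vertex set $S$ in which distinct $i,j$ are adjacent iff $A_{ij}>0$ is connected. *)

theory Defs
  imports "Jordan_Normal_Form.Char_Poly"
begin

text \<open>Nodes 1..n of the paper are indices 0..n-1 here; the centre (node 1) is index 0.\<close>

definition star_loop_mat :: "nat \<Rightarrow> real mat" where
  "star_loop_mat m = mat (m+1) (m+1) (\<lambda>(i,j).
      if i = j then sqrt (real m)
      else if i = 0 \<or> j = 0 then 1 else 0)"

definition ones_vec :: "nat \<Rightarrow> real vec" where
  "ones_vec n = vec n (\<lambda>_. 1)"

definition deg_vec :: "real mat \<Rightarrow> real vec" where
  "deg_vec A = A *\<^sub>v ones_vec (dim_row A)"

definition modularity_mat :: "real mat \<Rightarrow> real mat" where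
  "modularity_mat A = A - (1 / (ones_vec (dim_row A) \<bullet> deg_vec A)) \<cdot>\<^sub>m
      mat (dim_row A) (dim_row A) (\<lambda>(i,j). deg_vec A $ i * deg_vec A $ j)"

definition induced_connected :: "real mat \<Rightarrow> nat set \<Rightarrow> bool" where
  "induced_connected A S = (S \<noteq> {} \<and>
     (\<forall>i\<in>S. \<forall>j\<in>S. (i, j) \<in> ({(a, b). a \<in> S \<and> b \<in> S \<and> a \<noteq> b \<and> A $$ (a, b) > 0})\<^sup>*))"

end

theory Submission
  imports Defs
begin

text \<open>Write \<open>s = sqrt m\<close>. The all-ones vector lies in the kernel of \<open>M\<close>, since \<open>A 1 = d\<close>. A vector
  vanishing at the centre with entry sum 0 is an eigenvector for \<open>s\<close>: \<open>A\<close> acts on it as \<open>s\<close> and it is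
  orthogonal to \<open>d\<close>. Completing \<open>1\<close> and the \<open>m - 1\<close> vectors \<open>e\<^sub>j - e\<^sub>m\<close> by the centre \<open>e\<^sub>0\<close> gives a
  basis in which \<open>M\<close> is upper triangular with diagonal \<open>0, s, \<dots>, s, \<lambda>\<close> and \<open>\<lambda> < s\<close>, so
  \<open>\<chi>\<^sub>M(t) = t (t - s)\<^sup>m\<^sup>-\<^sup>1 (t - \<lambda>)\<close>. Conversely, the eigen-equations at the centre and at one leaf
  force \<open>d\<^sup>T x = 0\<close> and \<open>x\<^sub>0 = 0\<close>. A nonzero eigenvector for \<open>s\<close> thus has positive entries, all at
  leaves; leaves are pairwise non-adjacent, so the positive support is connected iff it is a single node.\<close>

lemma mult_mat_vec_unit_vec:
  fixes A :: "'a::semiring_1 mat"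
  assumes "A \<in> carrier_mat nr n" and "j < n"
  shows "A *\<^sub>v unit_vec n j = col A j"
  using assms by (intro eq_vecI) auto

lemma similar_mat_if_intertwined:
  fixes A :: "'a::field mat"
  assumes "A \<in> carrier_mat n n" "B \<in> carrier_mat n n" "P \<in> carrier_mat n n" "Q \<in> carrier_mat n n"
    and "Q * P = 1\<^sub>m n" and "A * P = P * B"
  shows "similar_mat A B"
proof -
  have PQ: "P * Q = 1\<^sub>m n" using mat_mult_left_right_inverse[of Q n P] assms by auto
  have "A = A * (P * Q)" using assms(1) by (simp add: PQ)
  also have "\<dots> = P * B * Q" using assms by (simp add: assoc_mult_mat[symmetric, of A n n P n Q n])
  finally show ?thesis using assms PQ by (intro similar_matI[of A B P Q n]) auto
qed

lemma order_linear_power_factor: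
  fixes p q :: "'a::idom poly"
  assumes "poly p a \<noteq> 0" and "poly q a \<noteq> 0"
  shows "order a (p * [:-a, 1:] ^ k * q) = k"
proof -
  have "p \<noteq> 0" "q \<noteq> 0" using assms by auto
  then have "p * [:-a, 1:] ^ k \<noteq> 0" "p * [:-a, 1:] ^ k * q \<noteq> 0" by auto
  then show ?thesis using assms by (simp add: order_mult order_0I)
qed

lemma positive_entry_if_sum_zero:
  fixes x :: "real vec"
  assumes "x \<in> carrier_vec n" "x \<noteq> 0\<^sub>v n" and "(\<Sum>i<n. x $ i) = 0"
  shows "\<exists>i<n. x $ i > 0"
proof (rule ccontr)
  assume "\<not> ?thesis"
  then have "\<forall>i\<in>{..<n}. - x $ i = 0"
    using sum_nonneg_eq_0_iff[of "{..<n}" "\<lambda>i. - x $ i"] assms(3) by (force simp: sum_negf)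
  then have "x = 0\<^sub>v n" using assms(1) by (intro eq_vecI) auto
  with assms(2) show False ..
qed

lemma deg_vec_carrier: "A \<in> carrier_mat n n \<Longrightarrow> deg_vec A \<in> carrier_vec n"
  unfolding deg_vec_def ones_vec_def by (intro mult_mat_vec_carrier) auto

lemma modularity_mat_mult_vec:
  assumes A: "A \<in> carrier_mat n n" and x: "x \<in> carrier_vec n"
  shows "modularity_mat A *\<^sub>v x
    = A *\<^sub>v x - ((deg_vec A \<bullet> x) / (ones_vec n \<bullet> deg_vec A)) \<cdot>\<^sub>v deg_vec A"
proof -
  define d where "d = deg_vec A"
  define c where "c = 1 / (ones_vec n \<bullet> d)"
  define D where "D = mat n n (\<lambda>(i, j). d $ i * d $ j)"
  have d: "d \<in> carrier_vec n" unfolding d_def using A by (rule deg_vec_carrier)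
  have D: "c \<cdot>\<^sub>m D \<in> carrier_mat n n" by (simp add: D_def)
  have "(c \<cdot>\<^sub>m D) *\<^sub>v x = (c * (d \<bullet> x)) \<cdot>\<^sub>v d"
  proof (rule eq_vecI)
    fix i assume "i < dim_vec ((c * (d \<bullet> x)) \<cdot>\<^sub>v d)"
    then have i: "i < n" using d by simp
    have "((c \<cdot>\<^sub>m D) *\<^sub>v x) $ i = (\<Sum>j<n. c * (d $ i * d $ j) * x $ j)"
      using i x by (simp add: D_def scalar_prod_def lessThan_atLeast0)
    also have "\<dots> = c * (\<Sum>j<n. d $ j * x $ j) * d $ i"
      by (simp add: sum_distrib_left mult_ac)
    finally show "((c \<cdot>\<^sub>m D) *\<^sub>v x) $ i = ((c * (d \<bullet> x)) \<cdot>\<^sub>v d) $ i"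
      using i d x by (simp add: scalar_prod_def lessThan_atLeast0)
  qed (simp add: D_def carrier_vecD[OF d])
  moreover have "modularity_mat A = A - c \<cdot>\<^sub>m D"
    using A by (simp add: modularity_mat_def d_def c_def D_def)
  ultimately show ?thesis using minus_mult_distrib_mat_vec[OF A D x] by (simp add: c_def d_def)
qed

lemma modularity_mat_mult_ones:
  assumes A: "A \<in> carrier_mat n n" and "ones_vec n \<bullet> deg_vec A \<noteq> 0"
  shows "modularity_mat A *\<^sub>v ones_vec n = 0\<^sub>v n"
proof -
  have one: "ones_vec n \<in> carrier_vec n" and d: "deg_vec A \<in> carrier_vec n"
    using A by (simp_all add: ones_vec_def deg_vec_carrier)
  have "deg_vec A \<bullet> ones_vec n = ones_vec n \<bullet> deg_vec A" by (rule comm_scalar_prod[OF d one])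
  then show ?thesis
    using assms d by (simp add: modularity_mat_mult_vec[OF A one]) (simp add: deg_vec_def)
qed

lemma zero_smult_vec [simp]: "(0 :: 'a::semiring_0) \<cdot>\<^sub>v v = 0\<^sub>v (dim_vec v)"
  by (intro eq_vecI) auto

lemma sum_vec_tail_eq: "(\<Sum>j<m. (x :: 'a::ab_group_add vec) $ Suc j) = (\<Sum>i<Suc m. x $ i) - x $ 0"
  by (simp add: sum.lessThan_Suc_shift del: sum.lessThan_Suc)

lemma star_loop_mat_carrier: "star_loop_mat m \<in> carrier_mat (Suc m) (Suc m)"
  by (simp add: star_loop_mat_def)

lemma star_loop_mat_mult_vec:
  assumes x: "x \<in> carrier_vec (Suc m)" and i: "i < Suc m"
  shows "(star_loop_mat m *\<^sub>v x) $ i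
    = (if i = 0 then sqrt (real m) * x $ 0 + (\<Sum>j<m. x $ Suc j) else x $ 0 + sqrt (real m) * x $ i)"
proof -
  have "(star_loop_mat m *\<^sub>v x) $ i = (\<Sum>j<Suc m. star_loop_mat m $$ (i, j) * x $ j)"
    using x i by (simp add: star_loop_mat_def scalar_prod_def lessThan_atLeast0)
  also have "\<dots> = (\<Sum>j<Suc m. (if j = i then sqrt (real m) * x $ j else 0)
      + (if i = 0 \<and> j \<noteq> 0 then x $ j else 0) + (if i \<noteq> 0 \<and> j = 0 then x $ j else 0))"
    using i by (intro sum.cong) (auto simp: star_loop_mat_def)
  also have "\<dots> = (\<Sum>j<Suc m. if j = i then sqrt (real m) * x $ j else 0)
      + (\<Sum>j<Suc m. if i = 0 \<and> j \<noteq> 0 then x $ j else 0)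
      + (\<Sum>j<Suc m. if i \<noteq> 0 \<and> j = 0 then x $ j else 0)"
    by (simp only: sum.distrib)
  also have "(\<Sum>j<Suc m. if j = i then sqrt (real m) * x $ j else 0) = sqrt (real m) * x $ i"
    using i by (simp add: sum.delta')
  also have "(\<Sum>j<Suc m. if i = 0 \<and> j \<noteq> 0 then x $ j else 0) = (if i = 0 then (\<Sum>j<m. x $ Suc j) else 0)"
    by (simp add: sum.lessThan_Suc_shift del: sum.lessThan_Suc)
  also have "(\<Sum>j<Suc m. if i \<noteq> 0 \<and> j = 0 then x $ j else 0) = (if i \<noteq> 0 then x $ 0 else 0)"
    by (simp add: sum.lessThan_Suc_shift del: sum.lessThan_Suc)
  finally show ?thesis by auto
qed

definition star_degree :: "nat \<Rightarrow> nat \<Rightarrow> real" where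
  "star_degree m i = (if i = 0 then sqrt (real m) + real m else sqrt (real m) + 1)"

definition star_total_degree :: "nat \<Rightarrow> real" where
  "star_total_degree m = (sqrt (real m) + real m) + (sqrt (real m) + 1) * real m"

lemma deg_vec_star_loop_mat: "deg_vec (star_loop_mat m) = vec (Suc m) (star_degree m)"
proof (rule eq_vecI)
  fix i assume "i < dim_vec (vec (Suc m) (star_degree m))"
  then have "i < Suc m" by simp
  then show "deg_vec (star_loop_mat m) $ i = vec (Suc m) (star_degree m) $ i"
    using star_loop_mat_mult_vec[of "ones_vec (Suc m)" m i] star_loop_mat_carrier[of m]
    by (simp add: deg_vec_def ones_vec_def star_degree_def)
qed (simp add: deg_vec_def star_loop_mat_def)

lemma star_degree_scalar_prod:
  assumes "x \<in> carrier_vec (Suc m)"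
  shows "deg_vec (star_loop_mat m) \<bullet> x
    = (sqrt (real m) + real m) * x $ 0 + (sqrt (real m) + 1) * (\<Sum>j<m. x $ Suc j)"
  using assms
  by (simp add: deg_vec_star_loop_mat scalar_prod_def lessThan_atLeast0[symmetric] star_degree_def
      sum.lessThan_Suc_shift sum_distrib_left del: sum.lessThan_Suc)

lemma star_total_degree_eq: "ones_vec (Suc m) \<bullet> deg_vec (star_loop_mat m) = star_total_degree m"
proof -
  have "ones_vec (Suc m) \<bullet> deg_vec (star_loop_mat m) = deg_vec (star_loop_mat m) \<bullet> ones_vec (Suc m)"
    by (rule comm_scalar_prod[of _ "Suc m"]) (auto simp: ones_vec_def deg_vec_star_loop_mat)
  then show ?thesis by (simp add: star_degree_scalar_prod ones_vec_def star_total_degree_def)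
qed

lemma star_total_degree_pos: "m \<ge> 1 \<Longrightarrow> star_total_degree m > 0"
  unfolding star_total_degree_def by (simp add: add_pos_nonneg)

lemma star_modularity_mat_carrier: "modularity_mat (star_loop_mat m) \<in> carrier_mat (Suc m) (Suc m)"
  unfolding modularity_mat_def using star_loop_mat_carrier[of m] by (intro minus_carrier_mat) auto

lemma star_modularity_mat_mult_vec:
  assumes x: "x \<in> carrier_vec (Suc m)" and i: "i < Suc m"
  shows "(modularity_mat (star_loop_mat m) *\<^sub>v x) $ i = (star_loop_mat m *\<^sub>v x) $ i
    - star_degree m i * ((sqrt (real m) + real m) * x $ 0 + (sqrt (real m) + 1) * (\<Sum>j<m. x $ Suc j))
      / star_total_degree m"
proof -
  have "deg_vec (star_loop_mat m) $ i = star_degree m i" "deg_vec (star_loop_mat m) \<in> carrier_vec (Suc m)"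
    using i by (simp_all add: deg_vec_star_loop_mat)
  then show ?thesis using x i
    by (simp add: modularity_mat_mult_vec[OF star_loop_mat_carrier x] star_total_degree_eq
        star_degree_scalar_prod)
qed

lemma star_modularity_mat_eigen_iff:
  assumes m: "m \<ge> 1" and x: "x \<in> carrier_vec (Suc m)"
  shows "modularity_mat (star_loop_mat m) *\<^sub>v x = sqrt (real m) \<cdot>\<^sub>v x
    \<longleftrightarrow> x $ 0 = 0 \<and> (\<Sum>i<Suc m. x $ i) = 0"
proof
  let ?M = "modularity_mat (star_loop_mat m)" and ?s = "sqrt (real m)" and ?D = "star_total_degree m"
  let ?L = "\<Sum>j<m. x $ Suc j"
  define c where "c = ((?s + real m) * x $ 0 + (?s + 1) * ?L) / ?D"
  have D: "?D > 0" using star_total_degree_pos[OF m] .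
  have Mx: "(?M *\<^sub>v x) $ i = (star_loop_mat m *\<^sub>v x) $ i - star_degree m i * c" if "i < Suc m" for i
    using star_modularity_mat_mult_vec[OF x that] unfolding c_def by simp
  assume eq: "?M *\<^sub>v x = ?s \<cdot>\<^sub>v x"
  have L: "?L = (?s + real m) * c"
    using eq Mx[of 0] x star_loop_mat_mult_vec[OF x, of 0]
    by (simp add: star_degree_def algebra_simps)
  have x0: "x $ 0 = (?s + 1) * c"
    using eq Mx[of 1] x m star_loop_mat_mult_vec[OF x, of 1]
    by (simp add: star_degree_def algebra_simps)
  \<comment> \<open>Substituting both relations into the definition of \<open>c\<close> leaves \<open>c\<close> times a nonzero factor.\<close>
  have "c * ?D = (?s + real m) * x $ 0 + (?s + 1) * ?L" using D by (simp add: c_def)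
  also have "\<dots> = c * (2 * (?s + real m) * (?s + 1))" by (simp add: L x0 algebra_simps)
  finally have "c * ?D = c * (2 * (?s + real m) * (?s + 1))" .
  then have "c * (?D - 2 * (?s + real m) * (?s + 1)) = 0" by (simp add: algebra_simps)
  moreover have "?D - 2 * (?s + real m) * (?s + 1) = - ((real m + 1) * ?s + 2 * real m)"
    unfolding star_total_degree_def by (simp add: algebra_simps)
  moreover have "(real m + 1) * ?s + 2 * real m > 0" using m by (simp add: add_pos_nonneg)
  ultimately have "c = 0" by simp
  then show "x $ 0 = 0 \<and> (\<Sum>i<Suc m. x $ i) = 0"
    using L x0 by (simp add: sum_vec_tail_eq)
next
  assume h: "x $ 0 = 0 \<and> (\<Sum>i<Suc m. x $ i) = 0"
  then have L: "(\<Sum>j<m. x $ Suc j) = 0" by (simp add: sum_vec_tail_eq)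
  show "modularity_mat (star_loop_mat m) *\<^sub>v x = sqrt (real m) \<cdot>\<^sub>v x"
  proof (rule eq_vecI)
    fix i assume "i < dim_vec (sqrt (real m) \<cdot>\<^sub>v x)"
    then have i: "i < Suc m" using x by simp
    show "(modularity_mat (star_loop_mat m) *\<^sub>v x) $ i = (sqrt (real m) \<cdot>\<^sub>v x) $ i"
      using h L i x by (simp add: star_modularity_mat_mult_vec star_loop_mat_mult_vec)
  qed (use x star_modularity_mat_carrier[of m] in simp)
qed

definition star_basis :: "nat \<Rightarrow> nat \<Rightarrow> real vec" where
  "star_basis m j = (if j = 0 then ones_vec (Suc m) else if j = m then unit_vec (Suc m) 0
     else unit_vec (Suc m) j - unit_vec (Suc m) m)"

definition star_basis_mat :: "nat \<Rightarrow> real mat" where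
  "star_basis_mat m = mat (Suc m) (Suc m) (\<lambda>(i, j). star_basis m j $ i)"

definition star_centre_coupling :: "nat \<Rightarrow> real" where
  "star_centre_coupling m = 1 - (sqrt (real m) + 1) * (sqrt (real m) + real m) / star_total_degree m"

definition star_residual_eigenvalue :: "nat \<Rightarrow> real" where
  "star_residual_eigenvalue m =
     sqrt (real m) - (sqrt (real m) + real m)\<^sup>2 / star_total_degree m - star_centre_coupling m"

definition star_triangular_mat :: "nat \<Rightarrow> real mat" where
  "star_triangular_mat m = mat (Suc m) (Suc m) (\<lambda>(i, j).
     if i = j then (if j = 0 then 0 else if j = m then star_residual_eigenvalue m else sqrt (real m))
     else if i = 0 \<and> j = m then star_centre_coupling m else 0)"

lemma star_basis_carrier: "star_basis m j \<in> carrier_vec (Suc m)"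
  by (simp add: star_basis_def ones_vec_def)

lemma col_star_basis_mat: "j < Suc m \<Longrightarrow> col (star_basis_mat m) j = star_basis m j"
  using star_basis_carrier[of m j] by (auto simp: star_basis_mat_def)

lemma col_star_triangular_mat:
  assumes "m \<ge> 1" and "j < Suc m"
  shows "col (star_triangular_mat m) j = star_triangular_mat m $$ (j, j) \<cdot>\<^sub>v unit_vec (Suc m) j
    + (if j = m then star_centre_coupling m else 0) \<cdot>\<^sub>v unit_vec (Suc m) 0"
  using assms by (intro eq_vecI) (auto simp: star_triangular_mat_def)

lemma star_modularity_mat_mult_basis:
  assumes m: "m \<ge> 1" and j: "j < Suc m"
  shows "modularity_mat (star_loop_mat m) *\<^sub>v star_basis m j
    = star_triangular_mat m $$ (j, j) \<cdot>\<^sub>v star_basis m j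
      + (if j = m then star_centre_coupling m else 0) \<cdot>\<^sub>v star_basis m 0"
proof -
  let ?M = "modularity_mat (star_loop_mat m)"
  consider "j = 0" | "0 < j" "j < m" | "j = m" using j by linarith
  then show ?thesis
  proof cases
    case 1
    have "?M *\<^sub>v ones_vec (Suc m) = 0\<^sub>v (Suc m)"
      using star_total_degree_pos[OF m]
      by (intro modularity_mat_mult_ones star_loop_mat_carrier) (simp add: star_total_degree_eq)
    then show ?thesis using 1 m by (simp add: star_basis_def star_triangular_mat_def ones_vec_def)
  next
    case 2
    have "?M *\<^sub>v star_basis m j = sqrt (real m) \<cdot>\<^sub>v star_basis m j"
      using 2 by (subst star_modularity_mat_eigen_iff[OF m star_basis_carrier])
        (simp add: star_basis_def sum_subtractf)
    then show ?thesis
      using 2 m star_basis_carrier[of m j] carrier_vecD[OF star_basis_carrier[of m 0]]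
      by (simp add: star_triangular_mat_def)
  next
    case 3
    have "?M *\<^sub>v unit_vec (Suc m) 0
      = star_residual_eigenvalue m \<cdot>\<^sub>v unit_vec (Suc m) 0 + star_centre_coupling m \<cdot>\<^sub>v ones_vec (Suc m)"
    proof (rule eq_vecI)
      fix i assume "i < dim_vec (star_residual_eigenvalue m \<cdot>\<^sub>v unit_vec (Suc m) 0
        + star_centre_coupling m \<cdot>\<^sub>v ones_vec (Suc m))"
      then have i: "i < Suc m" by (simp add: ones_vec_def)
      show "(?M *\<^sub>v unit_vec (Suc m) 0) $ i = (star_residual_eigenvalue m \<cdot>\<^sub>v unit_vec (Suc m) 0
        + star_centre_coupling m \<cdot>\<^sub>v ones_vec (Suc m)) $ i"
        using i by (simp add: star_modularity_mat_mult_vec star_loop_mat_mult_vec star_degree_def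
            star_residual_eigenvalue_def star_centre_coupling_def ones_vec_def power2_eq_square)
    qed (simp add: ones_vec_def star_modularity_mat_carrier[THEN carrier_matD(1)])
    then show ?thesis using 3 m by (simp add: star_basis_def star_triangular_mat_def)
  qed
qed

lemma star_modularity_mat_mult_basis_mat:
  assumes m: "m \<ge> 1"
  shows "modularity_mat (star_loop_mat m) * star_basis_mat m = star_basis_mat m * star_triangular_mat m"
proof (rule mat_col_eqI)
  fix j assume "j < dim_col (star_basis_mat m * star_triangular_mat m)"
  then have j: "j < Suc m" by (simp add: star_triangular_mat_def)
  have P: "star_basis_mat m \<in> carrier_mat (Suc m) (Suc m)"
    and T: "star_triangular_mat m \<in> carrier_mat (Suc m) (Suc m)"
    by (simp_all add: star_basis_mat_def star_triangular_mat_def)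
  have "col (star_basis_mat m * star_triangular_mat m) j = star_basis_mat m *\<^sub>v col (star_triangular_mat m) j"
    by (rule col_mult2[OF P T j])
  also have "\<dots> = star_triangular_mat m $$ (j, j) \<cdot>\<^sub>v star_basis m j
      + (if j = m then star_centre_coupling m else 0) \<cdot>\<^sub>v star_basis m 0"
    using P j by (simp add: col_star_triangular_mat[OF m j] mult_add_distrib_mat_vec[OF P] mult_mat_vec[OF P]
        mult_mat_vec_unit_vec[OF P] col_star_basis_mat)
  also have "\<dots> = modularity_mat (star_loop_mat m) *\<^sub>v star_basis m j"
    by (rule star_modularity_mat_mult_basis[OF m j, symmetric])
  also have "\<dots> = col (modularity_mat (star_loop_mat m) * star_basis_mat m) j"
    by (simp only: col_mult2[OF star_modularity_mat_carrier P j] col_star_basis_mat[OF j])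
  finally show "col (modularity_mat (star_loop_mat m) * star_basis_mat m) j
    = col (star_basis_mat m * star_triangular_mat m) j" ..
qed (simp_all add: star_basis_mat_def star_triangular_mat_def star_modularity_mat_carrier[THEN carrier_matD(1)])

definition star_coord_mat :: "nat \<Rightarrow> real mat" where
  "star_coord_mat m = mat (Suc m) (Suc m) (\<lambda>(k, l).
     (if k = 0 then 0 else if k = m then (if l = 0 then 1 else 0) else (if l = k then 1 else 0))
     + (if l = 0 then 0 else (if k = 0 then 1 else -1) / real m))"

lemma star_coord_mat_mult_vec:
  assumes x: "x \<in> carrier_vec (Suc m)" and k: "k < Suc m"
  shows "(star_coord_mat m *\<^sub>v x) $ k = (if k = 0 then 0 else if k = m then x $ 0 else x $ k)
     + (if k = 0 then 1 else -1) * (\<Sum>l<m. x $ Suc l) / real m"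
proof -
  have "(star_coord_mat m *\<^sub>v x) $ k = (\<Sum>l<Suc m. star_coord_mat m $$ (k, l) * x $ l)"
    using x k by (simp add: star_coord_mat_def scalar_prod_def lessThan_atLeast0)
  also have "\<dots> = (\<Sum>l<Suc m. if k = 0 then 0 else if k = m then (if l = 0 then x $ l else 0)
        else (if l = k then x $ l else 0))
      + (\<Sum>l<Suc m. if l = 0 then 0 else (if k = 0 then 1 else -1) * x $ l / real m)"
    unfolding sum.distrib[symmetric] using k by (intro sum.cong) (auto simp: star_coord_mat_def algebra_simps)
  also have "(\<Sum>l<Suc m. if k = 0 then 0 else if k = m then (if l = 0 then x $ l else 0)
        else (if l = k then x $ l else 0)) = (if k = 0 then 0 else if k = m then x $ 0 else x $ k)"
    using k by (auto simp: sum.delta')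
  also have "(\<Sum>l<Suc m. if l = 0 then 0 else (if k = 0 then 1 else -1) * x $ l / real m)
      = (if k = 0 then 1 else -1) * (\<Sum>l<m. x $ Suc l) / real m"
    by (simp add: sum.lessThan_Suc_shift sum_divide_distrib sum_distrib_left del: sum.lessThan_Suc)
  finally show ?thesis .
qed

lemma star_coord_mat_mult_basis:
  assumes m: "m \<ge> 1" and j: "j < Suc m"
  shows "star_coord_mat m *\<^sub>v star_basis m j = unit_vec (Suc m) j"
proof (rule eq_vecI)
  fix k assume "k < dim_vec (unit_vec (Suc m) j)"
  then have k: "k < Suc m" by simp
  have "(\<Sum>l<m. star_basis m j $ Suc l) = (if j = 0 then real m else 0)"
    using j by (simp add: sum_vec_tail_eq star_basis_def ones_vec_def sum_subtractf)
  then show "(star_coord_mat m *\<^sub>v star_basis m j) $ k = unit_vec (Suc m) j $ k"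
    using m j k by (simp add: star_coord_mat_mult_vec[OF star_basis_carrier k])
      (auto simp: star_basis_def ones_vec_def)
qed (simp add: star_coord_mat_def)

lemma star_coord_mat_left_inverse:
  assumes m: "m \<ge> 1"
  shows "star_coord_mat m * star_basis_mat m = 1\<^sub>m (Suc m)"
proof (rule mat_col_eqI)
  fix j assume "j < dim_col (1\<^sub>m (Suc m))"
  then have j: "j < Suc m" by simp
  have Q: "star_coord_mat m \<in> carrier_mat (Suc m) (Suc m)"
    and P: "star_basis_mat m \<in> carrier_mat (Suc m) (Suc m)"
    by (simp_all add: star_coord_mat_def star_basis_mat_def)
  have "col (star_coord_mat m * star_basis_mat m) j = star_coord_mat m *\<^sub>v star_basis m j"
    by (simp only: col_mult2[OF Q P j] col_star_basis_mat[OF j])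
  then show "col (star_coord_mat m * star_basis_mat m) j = col (1\<^sub>m (Suc m)) j"
    using j by (simp add: star_coord_mat_mult_basis[OF m j])
qed (simp_all add: star_coord_mat_def star_basis_mat_def)

lemma star_residual_eigenvalue_less:
  assumes m: "m \<ge> 1" shows "star_residual_eigenvalue m < sqrt (real m)"
proof -
  have D: "star_total_degree m > 0" using star_total_degree_pos[OF m] .
  have "star_residual_eigenvalue m
      = sqrt (real m) - 1 - (sqrt (real m) + real m) * (real m - 1) / star_total_degree m"
    unfolding star_residual_eigenvalue_def star_centre_coupling_def
    using D by (simp add: field_simps power2_eq_square)
  moreover have "(sqrt (real m) + real m) * (real m - 1) / star_total_degree m \<ge> 0"
    using m D by simp
  ultimately show ?thesis by simp
qed

lemma char_poly_star_modularity_mat: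
  assumes m: "m \<ge> 1"
  shows "char_poly (modularity_mat (star_loop_mat m))
    = [:0, 1:] * [:- sqrt (real m), 1:] ^ (m - 1) * [:- star_residual_eigenvalue m, 1:]"
proof -
  let ?T = "star_triangular_mat m"
  have T: "?T \<in> carrier_mat (Suc m) (Suc m)" by (simp add: star_triangular_mat_def)
  have "similar_mat (modularity_mat (star_loop_mat m)) ?T"
    using star_modularity_mat_carrier T star_coord_mat_left_inverse[OF m] star_modularity_mat_mult_basis_mat[OF m]
    by (intro similar_mat_if_intertwined[where P = "star_basis_mat m" and Q = "star_coord_mat m"])
      (auto simp: star_basis_mat_def star_coord_mat_def)
  then have "char_poly (modularity_mat (star_loop_mat m)) = (\<Prod>a\<leftarrow>diag_mat ?T. [:- a, 1:])"
    using char_poly_upper_triangular[OF T]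
    by (simp add: char_poly_similar upper_triangular_def star_triangular_mat_def)
  also have "diag_mat ?T = 0 # replicate (m - 1) (sqrt (real m)) @ [star_residual_eigenvalue m]"
  proof -
    have "[0..<Suc m] = 0 # [1..<m] @ [m]" using m by (simp add: upt_conv_Cons)
    moreover have "map (\<lambda>i. ?T $$ (i, i)) [1..<m] = map (\<lambda>_. sqrt (real m)) [1..<m]"
      by (intro map_cong) (auto simp: star_triangular_mat_def)
    ultimately show ?thesis using m by (simp add: diag_mat_def star_triangular_mat_def map_replicate_const)
  qed
  finally show ?thesis by (simp add: mult.assoc)
qed

lemma order_char_poly_star_modularity_mat:
  assumes m: "m \<ge> 1"
  shows "order (sqrt (real m)) (char_poly (modularity_mat (star_loop_mat m))) = m - 1"
  unfolding char_poly_star_modularity_mat[OF m]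
  using m star_residual_eigenvalue_less[OF m] by (intro order_linear_power_factor) auto

lemma eigenvalue_star_modularity_mat_iff:
  assumes m: "m \<ge> 2"
  shows "eigenvalue (modularity_mat (star_loop_mat m)) \<mu>
    \<longleftrightarrow> \<mu> = 0 \<or> \<mu> = sqrt (real m) \<or> \<mu> = star_residual_eigenvalue m"
  using m by (simp add: eigenvalue_root_char_poly[OF star_modularity_mat_carrier] char_poly_star_modularity_mat)

lemma induced_connected_star_leaves:
  assumes "S \<subseteq> {1..m}" and "S \<noteq> {}"
  shows "induced_connected (star_loop_mat m) S \<longleftrightarrow> card S = 1"
proof -
  have "star_loop_mat m $$ (a, b) = 0" if "a \<in> S" "b \<in> S" "a \<noteq> b" for a b
  proof -
    have "a \<in> {1..m}" "b \<in> {1..m}" using that assms(1) by auto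
    then show ?thesis using that(3) by (simp add: star_loop_mat_def)
  qed
  then have no_edges: "{(a, b). a \<in> S \<and> b \<in> S \<and> a \<noteq> b \<and> star_loop_mat m $$ (a, b) > 0} = {}"
    by auto
  have "induced_connected (star_loop_mat m) S \<longleftrightarrow> (\<exists>a. S = {a})"
    using assms(2) unfolding induced_connected_def no_edges by auto
  then show ?thesis by (simp add: card_1_singleton_iff)
qed

theorem mainTheorem6:
  fixes m n :: nat and A M :: "real mat"
  assumes "m \<ge> 2" and "n = m + 1"
    and "A = star_loop_mat m" and "M = modularity_mat A"
  shows "eigenvalue M (sqrt (real m))
    \<and> (\<forall>\<mu>. eigenvalue M \<mu> \<longrightarrow> \<mu> \<le> sqrt (real m))
    \<and> order (sqrt (real m)) (char_poly M) = m - 1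
    \<and> {x \<in> carrier_vec n. M *\<^sub>v x = sqrt (real m) \<cdot>\<^sub>v x}
        = {x \<in> carrier_vec n. x $ 0 = 0 \<and> (\<Sum>i<n. x $ i) = 0}
    \<and> (\<forall>x. eigenvector M x (sqrt (real m)) \<longrightarrow>
          (induced_connected A {i. i < n \<and> x $ i > 0} \<longleftrightarrow> card {i. i < n \<and> x $ i > 0} = 1))"
proof -
  have m: "m \<ge> 1" and n: "n = Suc m" using assms(1,2) by simp_all
  have M: "M \<in> carrier_mat n n" using star_modularity_mat_carrier[of m] assms(3,4) n by simp
  have eigenspace: "{x \<in> carrier_vec n. M *\<^sub>v x = sqrt (real m) \<cdot>\<^sub>v x}
      = {x \<in> carrier_vec n. x $ 0 = 0 \<and> (\<Sum>i<n. x $ i) = 0}"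
    using star_modularity_mat_eigen_iff[OF m] assms(3,4) n by auto
  have support: "induced_connected A {i. i < n \<and> x $ i > 0} \<longleftrightarrow> card {i. i < n \<and> x $ i > 0} = 1"
    if "eigenvector M x (sqrt (real m))" for x
  proof -
    have x: "x \<in> carrier_vec n" "x \<noteq> 0\<^sub>v n" and "x $ 0 = 0" "(\<Sum>i<n. x $ i) = 0"
      using that eigenspace M unfolding eigenvector_def by auto
    then have "{i. i < n \<and> x $ i > 0} \<subseteq> {1..m}" "{i. i < n \<and> x $ i > 0} \<noteq> {}"
      using positive_entry_if_sum_zero[OF x] n by (auto simp: Suc_le_eq intro!: gr0I)
    then show ?thesis using induced_connected_star_leaves assms(3) by blast
  qed
  show ?thesis
    using eigenvalue_star_modularity_mat_iff[OF assms(1)] star_residual_eigenvalue_less[OF m]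
      order_char_poly_star_modularity_mat[OF m] eigenspace support assms(3,4) by auto
qed

end
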